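(* Let $K$ be a field equipped with a field endomorphism $\sigma$, and for a matrix $E$ over $K$ and $j\in\mathbb{N}$ let $E^{(j)}$ denote the matrix obtained by applying $\sigma^j$ entrywise. Let $E_1,\ldots,E_t\in K^{p\times q}$ with $t\ge 1$. For each integer $k\ge 1$ let $M_k$ be the block matrix with $k$ block rows and $k+t-1$ block columns (each block of size $p\times q$) whose block in block row $a$ and block column $b$ ($0\le a\le k-1$, $0\le b\le k+t-2$) is $E_{b-a+1}^{(a)}$ if $0\le b-a\le t-1$ and the zero $p\times q$ matrix otherwise; i.e. \[M_k=\begin{pmatrix} E_1&E_2&\cdots&E_t&&&\\ &E_1^{(1)}&E_2^{(1)}&\cdots&E_t^{(1)}&&\\ &&\ddots&\ddots&\ddots&\ddots&\\ &&&E_1^{(k-1)}&E_2^{(k-1)}&\cdots&E_t^{(k-1)} \end{pmatrix}.\] Then there exist $d'\in\mathbb{N}$ and $s'\in\mathbb{Z}$ such that $\operatorname{rank}_K(M_k)=d'k+s'$ for all sufficiently large $k$. Moreover, the least $k_0$ such that $\operatorname{rank}_K(M_k)=d'k+s'$ holds for all $k\ge k_0$ is at most $(t-1)(\min\{p,q\}+1)$. *)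

theory Defs
  imports "Jordan_Normal_Form.DL_Rank"
begin

definition twist_mat :: "('a \<Rightarrow> 'a) \<Rightarrow> nat \<Rightarrow> 'a mat \<Rightarrow> 'a mat" where
  "twist_mat \<sigma> j E = map_mat (\<sigma> ^^ j) E"

text \<open>The matrices E_1..E_t are given as E 1, ..., E t.\<close>
definition block_mat :: "('a::field \<Rightarrow> 'a) \<Rightarrow> (nat \<Rightarrow> 'a mat) \<Rightarrow> nat \<Rightarrow> nat \<Rightarrow> nat \<Rightarrow> nat \<Rightarrow> 'a mat" where
  "block_mat \<sigma> E t p q k =
     mat (k * p) ((k + t - 1) * q)
       (\<lambda>(i, j). let a = i div p; b = j div q in
          if a \<le> b \<and> b - a \<le> t - 1
          then twist_mat \<sigma> a (E (b - a + 1)) $$ (i mod p, j mod q)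
          else 0)"

end

theory Submission
  imports Defs "HOL-Library.Function_Algebras"
begin

text \<open>
  View the rows of \<open>M\<^sub>k\<close> as finitely supported sequences and let \<open>r(k)\<close> be the dimension of
  their span, which is the rank. Block row \<open>a + 1\<close> is block row \<open>a\<close> with \<open>\<sigma>\<close> applied entrywise
  and shifted by \<open>q\<close> columns; since a field embedding preserves linear independence, the
  block rows \<open>s, \<dots>, s + k - 1\<close> span a space of dimension \<open>r(k)\<close> for every \<open>s\<close>. Submodularity of
  dimension then makes \<open>r\<close> concave, so its increments decrease to a limit \<open>d\<close>. Deleting the
  first \<open>j + t - 1\<close> block columns annihilates the rows of \<open>M\<^sub>j\<close> and costs the remaining rows at
  most \<open>(t - 1) min(p, q)\<close> dimensions, so \<open>r(j) + r(k) \<le> r(j + k) + (t - 1) min(p, q)\<close>.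
  Comparing with the eventual slope \<open>d\<close> shows that every increment from
  \<open>k = (t - 1) min(p, q)\<close> on already equals \<open>d\<close>.
\<close>

section \<open>Dimension in the space of sequences\<close>

interpretation seqs: vector_space "\<lambda>(c::'a::field) (v::nat \<Rightarrow> 'a). (\<lambda>i. c * v i)"
  by unfold_locales (auto simp: fun_eq_iff algebra_simps)

lemma sum_fun_apply: "(\<Sum>i\<in>I. F i) x = (\<Sum>i\<in>I. F i x)"
  by (induction I rule: infinite_finite_induct) auto

lemma seqs_dim_empty [simp]: "seqs.dim ({} :: (nat \<Rightarrow> 'a::field) set) = 0"
  using seqs.dim_eq_card_independent[OF seqs.independent_empty] by simp

lemma seqs_finite_basis:
  fixes S :: "(nat \<Rightarrow> 'a::field) set"
  assumes "finite S"
  obtains B where "B \<subseteq> S" "seqs.independent B" "S \<subseteq> seqs.span B" "seqs.dim S = card B" "finite B"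
proof -
  obtain B where B: "B \<subseteq> S" "seqs.independent B" "S \<subseteq> seqs.span B"
    using seqs.maximal_independent_subset[of S] by blast
  then have "seqs.span B = seqs.span S"
    using seqs.span_mono seqs.span_minimal seqs.subspace_span by (metis subset_antisym)
  then have "seqs.dim S = card B" using seqs.dim_eq_card B(2) by blast
  then show ?thesis using that B finite_subset[OF B(1) assms] by blast
qed

lemma seqs_dim_insert:
  fixes S :: "(nat \<Rightarrow> 'a::field) set"
  assumes "finite S"
  shows "seqs.dim (insert a S) = (if a \<in> seqs.span S then seqs.dim S else Suc (seqs.dim S))"
proof (cases "a \<in> seqs.span S")
  case True
  then show ?thesis using seqs.span_redundant seqs.span_eq_dim by metis
next
  case False
  obtain B where B: "B \<subseteq> S" "seqs.independent B" "S \<subseteq> seqs.span B" "seqs.dim S = card B" "finite B"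
    using seqs_finite_basis[OF assms] by blast
  have span_B: "seqs.span B = seqs.span S"
    using B seqs.span_mono seqs.span_minimal seqs.subspace_span by (metis subset_antisym)
  with False have "seqs.independent (insert a B)" using B(2) seqs.independent_insertI by auto
  moreover have "seqs.span (insert a B) = seqs.span (insert a S)"
    by (simp only: seqs.span_insert span_B)
  ultimately have "seqs.dim (insert a S) = card (insert a B)" using seqs.dim_eq_card by blast
  moreover have "a \<notin> B" using False span_B seqs.span_base by blast
  ultimately show ?thesis using False B by simp
qed

lemma seqs_dim_mono:
  fixes W :: "(nat \<Rightarrow> 'a::field) set"
  assumes "finite W" "V \<subseteq> seqs.span W"
  shows "seqs.dim V \<le> seqs.dim W"
proof -
  obtain B where B: "W \<subseteq> seqs.span B" "seqs.dim W = card B" "finite B"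
    using seqs_finite_basis[OF assms(1)] by blast
  then have "V \<subseteq> seqs.span B" using assms(2) seqs.span_minimal seqs.subspace_span by blast
  then show ?thesis using seqs.dim_le_card B by metis
qed

lemma seqs_dim_subset:
  fixes W :: "(nat \<Rightarrow> 'a::field) set"
  shows "finite W \<Longrightarrow> V \<subseteq> W \<Longrightarrow> seqs.dim V \<le> seqs.dim W"
  using seqs_dim_mono seqs.span_superset by blast

lemma seqs_card_le_dim:
  fixes V :: "(nat \<Rightarrow> 'a::field) set"
  assumes "finite V" "B \<subseteq> seqs.span V" "seqs.independent B"
  shows "card B \<le> seqs.dim V"
proof -
  obtain C where C: "V \<subseteq> seqs.span C" "seqs.dim V = card C" "finite C"
    using seqs_finite_basis[OF assms(1)] by blast
  then have "B \<subseteq> seqs.span C" using assms(2) seqs.span_minimal seqs.subspace_span by blast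
  then show ?thesis using seqs.independent_span_bound[OF C(3) assms(3)] C(2) by simp
qed

lemma seqs_dim_Un_le:
  fixes S :: "(nat \<Rightarrow> 'a::field) set"
  assumes "finite S" "finite U"
  shows "seqs.dim (S \<union> U) \<le> seqs.dim S + card U"
  using assms(2)
proof (induction U rule: finite_induct)
  case (insert u U)
  then show ?case using seqs_dim_insert[of "S \<union> U" u] assms by auto
qed simp

lemma seqs_dim_submodular:
  fixes A :: "(nat \<Rightarrow> 'a::field) set"
  assumes "finite A" "finite B" "C \<subseteq> A"
  shows "seqs.dim (A \<union> B) + seqs.dim C \<le> seqs.dim (C \<union> B) + seqs.dim A"
  using assms(2)
proof (induction B rule: finite_induct)
  case (insert b B)
  have "finite C" using assms finite_subset by blast
  moreover have "seqs.span (C \<union> B) \<subseteq> seqs.span (A \<union> B)"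
    using assms(3) by (intro seqs.span_mono) blast
  ultimately show ?case
    using insert seqs_dim_insert[of "A \<union> B" b] seqs_dim_insert[of "C \<union> B" b] assms(1) by auto
qed simp

definition semilinear :: "('a::field \<Rightarrow> 'a) \<Rightarrow> ((nat \<Rightarrow> 'a) \<Rightarrow> nat \<Rightarrow> 'a) \<Rightarrow> bool" where
  "semilinear \<sigma> T \<longleftrightarrow> (\<forall>x y. T (x + y) = T x + T y) \<and> (\<forall>c x. T (\<lambda>i. c * x i) = (\<lambda>i. \<sigma> c * T x i))"

lemma semilinear_image_span:
  assumes "semilinear \<sigma> T"
  shows "T ` seqs.span Z \<subseteq> seqs.span (T ` Z)"
proof -
  have T_add: "T (x + y) = T x + T y" and T_scale: "T (\<lambda>i. c * x i) = (\<lambda>i. \<sigma> c * T x i)" for x y c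
    using assms by (auto simp: semilinear_def)
  have "seqs.subspace {z. T z \<in> seqs.span (T ` Z)}"
    unfolding seqs.subspace_def
    using T_add[of 0 0] T_add T_scale seqs.span_zero seqs.span_add seqs.span_scale by auto
  moreover have "Z \<subseteq> {z. T z \<in> seqs.span (T ` Z)}" by (auto intro: seqs.span_base)
  ultimately show ?thesis using seqs.span_minimal by blast
qed

lemma semilinear_dim_image_le:
  assumes "semilinear \<sigma> T" "finite Z"
  shows "seqs.dim (T ` Z) \<le> seqs.dim Z"
proof -
  obtain B where B: "Z \<subseteq> seqs.span B" "seqs.dim Z = card B" "finite B"
    using seqs_finite_basis[OF assms(2)] by blast
  then have "T ` Z \<subseteq> seqs.span (T ` B)" using semilinear_image_span[OF assms(1)] by blast
  then have "seqs.dim (T ` Z) \<le> card (T ` B)" using seqs.dim_le_card B(3) by blast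
  also have "\<dots> \<le> card B" using B(3) card_image_le by blast
  finally show ?thesis using B(2) by simp
qed

lemma seqs_dim_kernel_image:
  fixes X :: "(nat \<Rightarrow> 'a::field) set"
  assumes "finite X" "finite Y" "semilinear id \<pi>" "\<And>x. x \<in> X \<Longrightarrow> \<pi> x = 0"
  shows "seqs.dim X + seqs.dim (\<pi> ` Y) \<le> seqs.dim (X \<union> Y)"
  using assms(2)
proof (induction Y rule: finite_induct)
  case (insert y Y)
  have "\<pi> 0 = 0" using assms(3) unfolding semilinear_def by (metis add_cancel_left_left)
  then have "\<pi> ` (X \<union> Y) \<subseteq> seqs.span (\<pi> ` Y)"
    using assms(4) seqs.span_zero by (auto intro: seqs.span_base)
  then have "\<pi> ` seqs.span (X \<union> Y) \<subseteq> seqs.span (\<pi> ` Y)"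
    using semilinear_image_span[OF assms(3), of "X \<union> Y"] seqs.span_minimal seqs.subspace_span by blast
  then show ?case
    using insert seqs_dim_insert[of "X \<union> Y" y] seqs_dim_insert[of "\<pi> ` Y" "\<pi> y"] assms(1) by auto
qed simp

section \<open>Field embeddings preserve linear independence\<close>

text \<open>Independence of indexed families, which unlike independence of sets survives the
  non-injective families arising during elimination.\<close>

definition independent_family :: "('i \<Rightarrow> nat \<Rightarrow> 'a::field) \<Rightarrow> 'i set \<Rightarrow> bool" where
  "independent_family f I \<longleftrightarrow> (\<forall>c. (\<forall>x. (\<Sum>i\<in>I. c i * f i x) = 0) \<longrightarrow> (\<forall>i\<in>I. c i = 0))"

lemma independent_familyD:
  "independent_family f I \<Longrightarrow> (\<And>x. (\<Sum>i\<in>I. c i * f i x) = 0) \<Longrightarrow> i \<in> I \<Longrightarrow> c i = 0"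
  unfolding independent_family_def by blast

lemma independent_family_id:
  fixes Z :: "(nat \<Rightarrow> 'a::field) set"
  assumes "finite Z" "seqs.independent Z"
  shows "independent_family (\<lambda>v. v) Z"
  unfolding independent_family_def
proof (intro allI impI ballI)
  fix c v assume "\<forall>x. (\<Sum>u\<in>Z. c u * u x) = 0" "v \<in> Z"
  then have "(\<Sum>u\<in>Z. (\<lambda>x. c u * u x)) = 0" "v \<in> Z" by (auto simp: fun_eq_iff sum_fun_apply)
  then show "c v = 0" using seqs.independentD[OF assms(2,1) subset_refl] by blast
qed

lemma independent_family_image:
  fixes f :: "'i \<Rightarrow> nat \<Rightarrow> 'a::field"
  assumes "finite I" "independent_family f I" "inj_on f I"
  shows "seqs.independent (f ` I)"
proof
  assume "seqs.dependent (f ` I)"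
  then obtain u where u: "\<exists>v\<in>f ` I. u v \<noteq> 0" "(\<Sum>v\<in>f ` I. (\<lambda>x. u v * v x)) = 0"
    using seqs.dependent_finite assms(1) by blast
  then have "(\<Sum>i\<in>I. u (f i) * f i x) = 0" for x
    using sum.reindex[OF assms(3), of "\<lambda>v. u v * v x"] by (simp add: fun_eq_iff sum_fun_apply)
  then have "u (f i) = 0" if "i \<in> I" for i
    using independent_familyD[OF assms(2), of "\<lambda>i. u (f i)"] that by blast
  with u(1) show False by blast
qed

lemma independent_family_nonzero:
  assumes "independent_family f I" "finite I" "i \<in> I"
  shows "f i \<noteq> 0"
proof
  assume "f i = 0"
  have "(\<Sum>k\<in>I. (if k = i then 1 else 0) * f k x) = 0" for x
  proof -
    have "(\<Sum>k\<in>I. (if k = i then 1 else 0) * f k x) = (\<Sum>k\<in>I. if k = i then f k x else 0)"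
      by (rule sum.cong) auto
    also have "\<dots> = 0" using \<open>f i = 0\<close> assms(2) by (simp add: sum.delta')
    finally show ?thesis .
  qed
  then show False using independent_familyD[OF assms(1) _ assms(3), of "\<lambda>k. if k = i then 1 else 0"] by simp
qed

lemma independent_family_eliminate:
  assumes ind: "independent_family f (insert i0 I)" and "i0 \<notin> I" "finite I"
  shows "independent_family (\<lambda>i x. f i x - r i * f i0 x) I"
  unfolding independent_family_def
proof (intro allI impI ballI)
  fix c i assume comb: "\<forall>x. (\<Sum>i\<in>I. c i * (f i x - r i * f i0 x)) = 0" and "i \<in> I"
  define c' where "c' = c(i0 := - (\<Sum>k\<in>I. c k * r k))"
  have "(\<Sum>k\<in>insert i0 I. c' k * f k x) = 0" for x
  proof -
    have "(\<Sum>k\<in>I. c' k * f k x) = (\<Sum>k\<in>I. c k * f k x)"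
      using \<open>i0 \<notin> I\<close> by (intro sum.cong) (auto simp: c'_def)
    moreover have "(\<Sum>k\<in>I. c k * f k x) = (\<Sum>k\<in>I. c k * r k) * f i0 x"
      using comb[rule_format, of x]
      by (simp add: right_diff_distrib sum_subtractf sum_distrib_right mult.assoc)
    ultimately show ?thesis using \<open>i0 \<notin> I\<close> \<open>finite I\<close> by (simp add: c'_def)
  qed
  then have "c' i = 0" using independent_familyD[OF ind] \<open>i \<in> I\<close> by blast
  then show "c i = 0" using \<open>i \<in> I\<close> \<open>i0 \<notin> I\<close> by (auto simp: c'_def split: if_splits)
qed

lemma independent_family_insert:
  assumes ind: "independent_family g I" and "i0 \<notin> I" "finite I"
    and F: "\<And>i. i \<in> I \<Longrightarrow> F i = (\<lambda>x. g i x + s i * F i0 x)"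
    and pivot: "F i0 j \<noteq> 0" "\<And>i. i \<in> I \<Longrightarrow> g i j = 0"
  shows "independent_family F (insert i0 I)"
  unfolding independent_family_def
proof (intro allI impI)
  fix c assume comb: "\<forall>x. (\<Sum>i\<in>insert i0 I. c i * F i x) = 0"
  define a where "a = c i0 + (\<Sum>i\<in>I. c i * s i)"
  have expand: "(\<Sum>i\<in>insert i0 I. c i * F i x) = a * F i0 x + (\<Sum>i\<in>I. c i * g i x)" for x
  proof -
    have "(\<Sum>i\<in>I. c i * F i x) = (\<Sum>i\<in>I. c i * g i x + (c i * s i) * F i0 x)"
      using F by (intro sum.cong) (auto simp: algebra_simps)
    then have "(\<Sum>i\<in>I. c i * F i x) = (\<Sum>i\<in>I. c i * g i x) + (\<Sum>i\<in>I. c i * s i) * F i0 x"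
      by (simp add: sum.distrib sum_distrib_right)
    then show ?thesis using \<open>i0 \<notin> I\<close> \<open>finite I\<close> by (simp add: a_def algebra_simps)
  qed
  have "a * F i0 j = 0" using comb expand[of j] pivot(2) by simp
  then have "a = 0" using pivot(1) by simp
  then have "(\<Sum>i\<in>I. c i * g i x) = 0" for x using comb expand by simp
  then have "\<forall>i\<in>I. c i = 0" using independent_familyD[OF ind] by blast
  moreover from this have "c i0 = 0" using \<open>a = 0\<close> by (simp add: a_def)
  ultimately show "\<forall>i\<in>insert i0 I. c i = 0" by blast
qed

lemma independent_family_map_hom:
  assumes "field_hom \<sigma>" "finite I" "independent_family f I"
  shows "independent_family (\<lambda>i. \<sigma> \<circ> f i) I"
  using assms(2,3)
proof (induction I arbitrary: f rule: finite_induct)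
  case empty
  then show ?case by (simp add: independent_family_def)
next
  case (insert i0 I)
  interpret field_hom \<sigma> by fact
  have "f i0 \<noteq> 0" using independent_family_nonzero[OF insert.prems] insert.hyps(1) by blast
  then obtain j where j: "f i0 j \<noteq> 0" by (auto simp: fun_eq_iff)
  define r where "r i = f i j / f i0 j" for i
  define g where "g i x = f i x - r i * f i0 x" for i x
  have "independent_family g I"
    unfolding g_def by (rule independent_family_eliminate) (use insert in auto)
  then have "independent_family (\<lambda>i. \<sigma> \<circ> g i) I" by (rule insert.IH)
  then show ?case
  proof (rule independent_family_insert[where s = "\<lambda>i. \<sigma> (r i)" and j = j])
    show "\<sigma> \<circ> f i = (\<lambda>x. (\<sigma> \<circ> g i) x + \<sigma> (r i) * (\<sigma> \<circ> f i0) x)" for i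
      by (simp add: g_def fun_eq_iff hom_minus hom_mult)
    show "(\<sigma> \<circ> g i) j = 0" for i using j by (simp add: g_def r_def)
  qed (use insert j in auto)
qed

definition seq_shift :: "nat \<Rightarrow> (nat \<Rightarrow> 'a::zero) \<Rightarrow> nat \<Rightarrow> 'a" where
  "seq_shift q h = (\<lambda>j. if q \<le> j then h (j - q) else 0)"

lemma independent_family_shift:
  assumes "independent_family f I"
  shows "independent_family (\<lambda>i. seq_shift q (f i)) I"
  unfolding independent_family_def
proof (intro allI impI)
  fix c assume "\<forall>x. (\<Sum>i\<in>I. c i * seq_shift q (f i) x) = 0"
  then have "(\<Sum>i\<in>I. c i * f i x) = 0" for x by (auto simp: seq_shift_def dest: spec[of _ "x + q"])
  then show "\<forall>i\<in>I. c i = 0" using independent_familyD[OF assms] by blast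
qed

text \<open>The map is only \<open>\<sigma>\<close>-semilinear, so equality of dimensions rests on \<open>\<sigma>\<close> preserving
  linear independence.\<close>

lemma seqs_dim_shift_hom_image:
  fixes \<sigma> :: "'a::field \<Rightarrow> 'a"
  assumes "field_hom \<sigma>" "finite Z"
  shows "seqs.dim ((\<lambda>h. seq_shift q (\<sigma> \<circ> h)) ` Z) = seqs.dim Z"
    (is "seqs.dim (?T ` Z) = _")
proof (rule antisym)
  interpret field_hom \<sigma> by fact
  have "semilinear \<sigma> ?T"
    unfolding semilinear_def seq_shift_def by (simp add: fun_eq_iff hom_add hom_mult)
  then show "seqs.dim (?T ` Z) \<le> seqs.dim Z" using semilinear_dim_image_le assms(2) by blast
  have inj_T: "inj_on ?T U" for U
  proof (rule inj_onI)
    fix h h' assume "?T h = ?T h'"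
    then have "?T h (j + q) = ?T h' (j + q)" for j by simp
    then have "\<sigma> (h j) = \<sigma> (h' j)" for j by (simp add: seq_shift_def)
    then show "h = h'" by (simp add: fun_eq_iff)
  qed
  obtain B where B: "B \<subseteq> Z" "seqs.independent B" "Z \<subseteq> seqs.span B" "seqs.dim Z = card B" "finite B"
    by (rule seqs_finite_basis[OF assms(2)])
  have "independent_family (\<lambda>v. v) B" using independent_family_id B(5,2) by blast
  then have "independent_family (\<lambda>v. \<sigma> \<circ> v) B"
    using independent_family_map_hom[OF assms(1) B(5)] by simp
  then have "independent_family ?T B" by (rule independent_family_shift)
  then have "seqs.independent (?T ` B)" using independent_family_image B(5) inj_T by blast
  moreover have "?T ` B \<subseteq> seqs.span (?T ` Z)"
    using image_mono[OF B(1)] seqs.span_superset by (rule order.trans)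
  ultimately have "card (?T ` B) \<le> seqs.dim (?T ` Z)"
    using seqs_card_le_dim[OF finite_imageI[OF assms(2)]] by blast
  then show "seqs.dim Z \<le> seqs.dim (?T ` Z)" using B(4) card_image[OF inj_T] by simp
qed

section \<open>Matrix rank as the dimension of the row space\<close>

lemma seqs_dim_eq_card_maximal:
  fixes V :: "(nat \<Rightarrow> 'a::field) set"
  assumes "B \<subseteq> V" "seqs.independent B" "\<And>v. v \<in> V \<Longrightarrow> v \<notin> B \<Longrightarrow> seqs.dependent (insert v B)"
  shows "seqs.dim V = card B"
proof -
  have "V \<subseteq> seqs.span B"
  proof
    fix v assume "v \<in> V"
    show "v \<in> seqs.span B"
    proof (cases "v \<in> B")
      case False
      then show ?thesis using assms(2) assms(3)[OF \<open>v \<in> V\<close> False] seqs.independent_insertI by blast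
    qed (rule seqs.span_base)
  qed
  then show ?thesis using seqs.basis_card_eq_dim[OF assms(1) _ assms(2)] by simp
qed

definition seq_of_vec :: "'a::zero vec \<Rightarrow> nat \<Rightarrow> 'a" where
  "seq_of_vec v = (\<lambda>i. if i < dim_vec v then v $ i else 0)"

lemma inj_on_seq_of_vec: "inj_on seq_of_vec (carrier_vec n)"
proof (rule inj_onI)
  fix v w :: "'a vec" assume "v \<in> carrier_vec n" "w \<in> carrier_vec n" "seq_of_vec v = seq_of_vec w"
  then show "v = w" by (intro eq_vecI) (auto simp: seq_of_vec_def fun_eq_iff, metis)
qed

lemma seq_of_vec_zero [simp]: "seq_of_vec (0\<^sub>v n) = 0"
  by (simp add: seq_of_vec_def fun_eq_iff)

lemma seq_of_vec_eq_zero_iff: "v \<in> carrier_vec n \<Longrightarrow> seq_of_vec v = 0 \<longleftrightarrow> v = 0\<^sub>v n"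
  by (auto simp: seq_of_vec_def fun_eq_iff intro!: eq_vecI)

lemma (in vec_space) seq_of_vec_lincomb:
  assumes "finite T" "T \<subseteq> carrier_vec n"
  shows "seq_of_vec (lincomb a T) = (\<Sum>v\<in>T. (\<lambda>i. a v * seq_of_vec v i))"
proof
  fix i
  have "dim_vec v = n" if "v \<in> T" for v using assms(2) that by auto
  then show "seq_of_vec (lincomb a T) i = (\<Sum>v\<in>T. (\<lambda>i. a v * seq_of_vec v i)) i"
    using lincomb_index[OF _ assms(2)] by (simp add: seq_of_vec_def sum_fun_apply lincomb_dim[OF assms])
qed

lemma (in vec_space) lin_dep_iff_seqs_dependent:
  assumes "finite T" "T \<subseteq> carrier_vec n"
  shows "lin_dep T \<longleftrightarrow> seqs.dependent (seq_of_vec ` T)"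
proof -
  have inj: "inj_on seq_of_vec T" using inj_on_seq_of_vec assms(2) inj_on_subset by blast
  have comb: "(\<Sum>x\<in>seq_of_vec ` T. (\<lambda>i. u x * x i)) = seq_of_vec (lincomb (u \<circ> seq_of_vec) T)" for u
    using sum.reindex[OF inj, of "\<lambda>x. (\<lambda>i. u x * x i)"] seq_of_vec_lincomb[OF assms] by simp
  have zero: "seq_of_vec (lincomb a T) = 0 \<longleftrightarrow> lincomb a T = 0\<^sub>v n" for a
    by (rule seq_of_vec_eq_zero_iff[OF lincomb_closed[OF assms(2)]])
  show ?thesis
  proof
    assume "lin_dep T"
    then obtain a v where a: "lincomb a T = 0\<^sub>v n" "v \<in> T" "a v \<noteq> 0"
      using finite_lin_dep[OF assms(1)] assms(2) by auto
    define u where "u = a \<circ> the_inv_into T seq_of_vec"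
    have "lincomb (u \<circ> seq_of_vec) T = lincomb a T"
      using the_inv_into_f_f[OF inj] assms(2) by (intro lincomb_cong) (auto simp: u_def)
    then have "(\<Sum>x\<in>seq_of_vec ` T. (\<lambda>i. u x * x i)) = 0" using a(1) comb zero by simp
    moreover have "u (seq_of_vec v) \<noteq> 0" using a(2,3) the_inv_into_f_f[OF inj] by (simp add: u_def)
    ultimately show "seqs.dependent (seq_of_vec ` T)"
      using seqs.dependent_finite assms(1) a(2) by blast
  next
    assume "seqs.dependent (seq_of_vec ` T)"
    then obtain u v where "(\<Sum>x\<in>seq_of_vec ` T. (\<lambda>i. u x * x i)) = 0" "v \<in> T" "u (seq_of_vec v) \<noteq> 0"
      using seqs.dependent_finite assms(1) by blast
    then show "lin_dep T"
      using comb zero lin_dep_crit[OF assms(1) subset_refl, where a = "u \<circ> seq_of_vec"] by auto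
  qed
qed

lemma (in vec_space) rank_eq_seqs_dim_cols:
  assumes A: "A \<in> carrier_mat n nc"
  shows "rank A = seqs.dim (seq_of_vec ` set (cols A))"
proof -
  have cols: "set (cols A) \<subseteq> carrier_vec n" using A cols_dim by blast
  have "lin_indpt {}" by (simp add: lin_dep_def)
  then obtain S where max: "maximal S (\<lambda>T. T \<subseteq> set (cols A) \<and> lin_indpt T)"
    using maximal_exists_superset[of "set (cols A)" "\<lambda>T. T \<subseteq> set (cols A) \<and> lin_indpt T" "{}"] by blast
  then have S: "S \<subseteq> set (cols A)" "lin_indpt S" "finite S"
    using finite_subset unfolding maximal_def by auto
  have inj: "inj_on seq_of_vec (set (cols A))" using inj_on_seq_of_vec cols inj_on_subset by blast
  have "seqs.dim (seq_of_vec ` set (cols A)) = card (seq_of_vec ` S)"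
  proof (rule seqs_dim_eq_card_maximal)
    show "seq_of_vec ` S \<subseteq> seq_of_vec ` set (cols A)" using S(1) by blast
    show "seqs.independent (seq_of_vec ` S)" using lin_dep_iff_seqs_dependent S cols by blast
    fix w assume "w \<in> seq_of_vec ` set (cols A)" "w \<notin> seq_of_vec ` S"
    then obtain c where c: "c \<in> set (cols A)" "c \<notin> S" "w = seq_of_vec c" by blast
    then have "lin_dep (insert c S)" using max S(1) unfolding maximal_def by blast
    then show "seqs.dependent (insert w (seq_of_vec ` S))"
      using lin_dep_iff_seqs_dependent[of "insert c S"] S c cols by auto
  qed
  then show ?thesis
    using rank_card_indpt[OF A max] card_image[OF inj_on_subset[OF inj S(1)]] by simp
qed

lemma seqs_dim_rows_le_cols:
  fixes A :: "'a::field mat"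
  shows "seqs.dim (seq_of_vec ` set (rows A)) \<le> seqs.dim (seq_of_vec ` set (cols A))"
proof -
  obtain B where B: "B \<subseteq> seq_of_vec ` set (cols A)" "seqs.independent B"
      "seq_of_vec ` set (cols A) \<subseteq> seqs.span B" "seqs.dim (seq_of_vec ` set (cols A)) = card B" "finite B"
    by (rule seqs_finite_basis[OF finite_imageI[OF List.finite_set]])
  have "\<exists>u. seq_of_vec (col A j) = (\<Sum>v\<in>B. (\<lambda>i. u v * v i))" if "j < dim_col A" for j
  proof -
    have "seq_of_vec (col A j) \<in> seqs.span B" using B(3) that by (auto simp: cols_def)
    then show ?thesis unfolding seqs.span_finite[OF B(5)] by (auto simp: image_iff)
  qed
  then obtain U where U: "\<And>j. j < dim_col A \<Longrightarrow> seq_of_vec (col A j) = (\<Sum>v\<in>B. (\<lambda>i. U j v * v i))"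
    by metis
  define w where "w v = (\<lambda>j. if j < dim_col A then U j v else 0)" for v
  have row_comb: "seq_of_vec (row A i) = (\<Sum>v\<in>B. (\<lambda>j. v i * w v j))" if "i < dim_row A" for i
  proof
    fix j
    show "seq_of_vec (row A i) j = (\<Sum>v\<in>B. (\<lambda>j. v i * w v j)) j"
    proof (cases "j < dim_col A")
      case True
      then have "seq_of_vec (row A i) j = seq_of_vec (col A j) i" using that by (simp add: seq_of_vec_def)
      then show ?thesis using U[OF True] True by (simp add: sum_fun_apply w_def mult.commute)
    qed (simp add: seq_of_vec_def sum_fun_apply w_def)
  qed
  have "seq_of_vec ` set (rows A) \<subseteq> seqs.span (w ` B)"
  proof
    fix x assume "x \<in> seq_of_vec ` set (rows A)"
    then obtain i where "i < dim_row A" "x = seq_of_vec (row A i)" by (auto simp: rows_def)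
    moreover have "(\<Sum>v\<in>B. (\<lambda>j. v i * w v j)) \<in> seqs.span (w ` B)"
      by (intro seqs.span_sum seqs.span_scale seqs.span_base imageI)
    ultimately show "x \<in> seqs.span (w ` B)" using row_comb by simp
  qed
  then have "seqs.dim (seq_of_vec ` set (rows A)) \<le> card (w ` B)" using seqs.dim_le_card B(5) by blast
  also have "\<dots> \<le> card B" using card_image_le B(5) by blast
  finally show ?thesis using B(4) by simp
qed

lemma seqs_dim_rows_eq_cols:
  fixes A :: "'a::field mat"
  shows "seqs.dim (seq_of_vec ` set (rows A)) = seqs.dim (seq_of_vec ` set (cols A))"
  using seqs_dim_rows_le_cols[of A] seqs_dim_rows_le_cols[of "transpose_mat A"] by simp

lemma rank_eq_seqs_dim_rows:
  fixes A :: "'a::field mat"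
  assumes "A \<in> carrier_mat n nc"
  shows "vec_space.rank n A = seqs.dim (seq_of_vec ` set (rows A))"
  unfolding seqs_dim_rows_eq_cols by (rule vec_space.rank_eq_seqs_dim_cols[OF assms])

section \<open>The rows of the block matrices\<close>

text \<open>Row \<open>i\<close> of block row \<open>a\<close> of \<open>M\<^sub>k\<close>, for any \<open>k > a\<close>, as a sequence.\<close>

definition band_row :: "('a::field \<Rightarrow> 'a) \<Rightarrow> (nat \<Rightarrow> 'a mat) \<Rightarrow> nat \<Rightarrow> nat \<Rightarrow> nat \<Rightarrow> nat \<Rightarrow> nat \<Rightarrow> 'a" where
  "band_row \<sigma> E t q a i =
     (\<lambda>j. if a * q \<le> j \<and> j < (a + t) * q then (\<sigma> ^^ a) (E (j div q - a + 1) $$ (i, j mod q)) else 0)"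

definition band_rows :: "('a::field \<Rightarrow> 'a) \<Rightarrow> (nat \<Rightarrow> 'a mat) \<Rightarrow> nat \<Rightarrow> nat \<Rightarrow> nat \<Rightarrow> nat \<Rightarrow> nat \<Rightarrow> (nat \<Rightarrow> 'a) set" where
  "band_rows \<sigma> E t p q s n = (\<lambda>(a, i). band_row \<sigma> E t q a i) ` ({s..<s + n} \<times> {..<p})"

lemma mult_add_less_mult: "a < k \<Longrightarrow> i < p \<Longrightarrow> a * p + i < k * (p::nat)"
proof -
  assume "a < k" "i < p"
  then have "a * p + i < (a + 1) * p" by simp
  also have "\<dots> \<le> k * p" using \<open>a < k\<close> by (intro mult_right_mono) auto
  finally show ?thesis .
qed

lemma lessThan_mult_eq_image: "{..<k * p} = (\<lambda>(a, i). a * p + i) ` ({..<k} \<times> {..<(p::nat)})"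
proof
  show "{..<k * p} \<subseteq> (\<lambda>(a, i). a * p + i) ` ({..<k} \<times> {..<p})"
  proof
    fix r assume "r \<in> {..<k * p}"
    then have "0 < p" by (cases p) auto
    with \<open>r \<in> {..<k * p}\<close> have "r div p < k" by (simp add: div_less_iff_less_mult)
    then show "r \<in> (\<lambda>(a, i). a * p + i) ` ({..<k} \<times> {..<p})"
      using \<open>0 < p\<close> by (intro image_eqI[of _ _ "(r div p, r mod p)"]) auto
  qed
  show "(\<lambda>(a, i). a * p + i) ` ({..<k} \<times> {..<p}) \<subseteq> {..<k * p}" using mult_add_less_mult by auto
qed

lemma seq_of_vec_row_block_mat:
  assumes t: "t \<ge> 1" and E: "\<And>b. b \<in> {1..t} \<Longrightarrow> E b \<in> carrier_mat p q" and "a < k" "i < p"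
  shows "seq_of_vec (row (block_mat \<sigma> E t p q k) (a * p + i)) = band_row \<sigma> E t q a i"
proof
  fix j
  have "a * p + i < k * p" using assms(3,4) by (rule mult_add_less_mult)
  moreover have "(a * p + i) div p = a" "(a * p + i) mod p = i" using \<open>i < p\<close> by auto
  ultimately have entry: "seq_of_vec (row (block_mat \<sigma> E t p q k) (a * p + i)) j =
      (if j < (k + t - 1) * q \<and> a \<le> j div q \<and> j div q - a \<le> t - 1
       then twist_mat \<sigma> a (E (j div q - a + 1)) $$ (i, j mod q) else 0)"
    using \<open>i < p\<close> by (simp add: seq_of_vec_def block_mat_def Let_def)
  show "seq_of_vec (row (block_mat \<sigma> E t p q k) (a * p + i)) j = band_row \<sigma> E t q a i j"
  proof (cases "a * q \<le> j \<and> j < (a + t) * q")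
    case True
    then have "0 < q" by (cases q) auto
    then have block: "a \<le> j div q" "j div q < a + t"
      using True by (simp_all add: less_eq_div_iff_mult_less_eq div_less_iff_less_mult)
    have "(a + t) * q \<le> (k + t - 1) * q" using \<open>a < k\<close> by (intro mult_right_mono) auto
    then have "j < (k + t - 1) * q" using True by linarith
    moreover have "E (j div q - a + 1) \<in> carrier_mat p q" using block by (intro E) auto
    ultimately show ?thesis
      using entry True block \<open>i < p\<close> \<open>0 < q\<close> by (simp add: band_row_def twist_mat_def)
  next
    case False
    have "\<not> (j < (k + t - 1) * q \<and> a \<le> j div q \<and> j div q - a \<le> t - 1)"
    proof
      assume "j < (k + t - 1) * q \<and> a \<le> j div q \<and> j div q - a \<le> t - 1"
      then have "0 < q" "a \<le> j div q" "j div q < a + t" using t by (cases q; auto)+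
      then show False
        using False by (simp add: less_eq_div_iff_mult_less_eq div_less_iff_less_mult)
    qed
    then show ?thesis unfolding entry band_row_def using False by (simp only: if_False)
  qed
qed

lemma seq_of_vec_rows_block_mat:
  assumes "t \<ge> 1" "\<And>b. b \<in> {1..t} \<Longrightarrow> E b \<in> carrier_mat p q"
  shows "seq_of_vec ` set (rows (block_mat \<sigma> E t p q k)) = band_rows \<sigma> E t p q 0 k"
proof -
  define M where "M = block_mat \<sigma> E t p q k"
  have "dim_row M = k * p" by (simp add: M_def block_mat_def)
  then have "set (rows M) = row M ` {..<k * p}" by (simp add: rows_def atLeast0LessThan)
  also have "\<dots> = (\<lambda>(a, i). row M (a * p + i)) ` ({..<k} \<times> {..<p})"
    unfolding lessThan_mult_eq_image image_image by (simp add: case_prod_beta)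
  finally have "seq_of_vec ` set (rows M) = (\<lambda>(a, i). seq_of_vec (row M (a * p + i))) ` ({..<k} \<times> {..<p})"
    by (simp add: image_image case_prod_beta)
  also have "\<dots> = band_rows \<sigma> E t p q 0 k"
    unfolding band_rows_def M_def using seq_of_vec_row_block_mat[OF assms] by (intro image_cong) auto
  finally show ?thesis unfolding M_def .
qed

lemma rank_block_mat:
  assumes "t \<ge> 1" "\<And>b. b \<in> {1..t} \<Longrightarrow> E b \<in> carrier_mat p q"
  shows "vec_space.rank (k * p) (block_mat \<sigma> E t p q k) = seqs.dim (band_rows \<sigma> E t p q 0 k)"
proof -
  have "block_mat \<sigma> E t p q k \<in> carrier_mat (k * p) ((k + t - 1) * q)" by (simp add: block_mat_def)
  moreover have "seq_of_vec ` set (rows (block_mat \<sigma> E t p q k)) = band_rows \<sigma> E t p q 0 k"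
    using assms by (rule seq_of_vec_rows_block_mat)
  ultimately show ?thesis using rank_eq_seqs_dim_rows by metis
qed

lemma finite_band_rows [simp]: "finite (band_rows \<sigma> E t p q s n)"
  by (simp add: band_rows_def)

lemma band_rows_0 [simp]: "band_rows \<sigma> E t p q s 0 = {}"
  by (simp add: band_rows_def)

lemma card_band_rows_le: "card (band_rows \<sigma> E t p q s n) \<le> n * p"
proof -
  have "card (band_rows \<sigma> E t p q s n) \<le> card ({s..<s + n} \<times> {..<p})"
    unfolding band_rows_def by (rule card_image_le) simp
  then show ?thesis by (simp add: card_cartesian_product)
qed

lemma band_rows_add:
  "band_rows \<sigma> E t p q s (m + n) = band_rows \<sigma> E t p q s m \<union> band_rows \<sigma> E t p q (s + m) n"
proof -
  have "{s..<s + (m + n)} = {s..<s + m} \<union> {s + m..<s + m + n}" by auto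
  then show ?thesis unfolding band_rows_def by (simp add: Sigma_Un_distrib1 image_Un add.assoc)
qed

lemma shift_band_row:
  assumes "\<sigma> 0 = 0"
  shows "seq_shift q (\<sigma> \<circ> band_row \<sigma> E t q a i) = band_row \<sigma> E t q (Suc a) i"
proof
  fix j
  show "seq_shift q (\<sigma> \<circ> band_row \<sigma> E t q a i) j = band_row \<sigma> E t q (Suc a) i j"
  proof (cases "q \<le> j \<and> 0 < q")
    case True
    then have "j div q = Suc ((j - q) div q)" "j mod q = (j - q) mod q"
      using le_div_geq le_mod_geq by auto
    moreover have "(a * q \<le> j - q \<and> j - q < (a + t) * q) \<longleftrightarrow> (Suc a * q \<le> j \<and> j < (Suc a + t) * q)"
      using True by (auto simp: algebra_simps)
    ultimately show ?thesis using True assms by (simp add: seq_shift_def band_row_def)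
  next
    case False
    then show ?thesis using assms by (auto simp: seq_shift_def band_row_def)
  qed
qed

lemma shift_band_rows:
  assumes "\<sigma> 0 = 0"
  shows "(\<lambda>h. seq_shift q (\<sigma> \<circ> h)) ` band_rows \<sigma> E t p q s n = band_rows \<sigma> E t p q (Suc s) n"
proof -
  have "(\<lambda>h. seq_shift q (\<sigma> \<circ> h)) ` band_rows \<sigma> E t p q s n
      = (\<lambda>(a, i). band_row \<sigma> E t q a i) ` ((\<lambda>(a, i). (Suc a, i)) ` ({s..<s + n} \<times> {..<p}))"
    unfolding band_rows_def image_image using shift_band_row[of \<sigma>, OF assms] by (simp add: case_prod_beta)
  also have "(\<lambda>(a, i). (Suc a, i)) ` ({s..<s + n} \<times> {..<p}) = {Suc s..<Suc s + n} \<times> {..<p}"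
    using image_paired_Times[of Suc "\<lambda>i. i" "{s..<s + n}" "{..<p}"] by simp
  finally show ?thesis unfolding band_rows_def .
qed

lemma dim_band_rows_translate:
  assumes "field_hom \<sigma>"
  shows "seqs.dim (band_rows \<sigma> E t p q s n) = seqs.dim (band_rows \<sigma> E t p q 0 n)"
proof -
  interpret field_hom \<sigma> by fact
  show ?thesis
  proof (induction s)
    case (Suc s)
    then show ?case
      using seqs_dim_shift_hom_image[OF assms finite_band_rows] shift_band_rows[of \<sigma>, OF hom_zero] by metis
  qed simp
qed

definition band_rank :: "('a::field \<Rightarrow> 'a) \<Rightarrow> (nat \<Rightarrow> 'a mat) \<Rightarrow> nat \<Rightarrow> nat \<Rightarrow> nat \<Rightarrow> nat \<Rightarrow> nat" where
  "band_rank \<sigma> E t p q n = seqs.dim (band_rows \<sigma> E t p q 0 n)"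

lemma band_rank_mono: "band_rank \<sigma> E t p q n \<le> band_rank \<sigma> E t p q (Suc n)"
  unfolding band_rank_def using band_rows_add[of \<sigma> E t p q 0 n 1]
  by (intro seqs_dim_subset) auto

lemma band_rank_add_le: "band_rank \<sigma> E t p q (m + n) \<le> band_rank \<sigma> E t p q m + n * p"
proof -
  have "band_rank \<sigma> E t p q (m + n) \<le> band_rank \<sigma> E t p q m + card (band_rows \<sigma> E t p q m n)"
    unfolding band_rank_def using band_rows_add[of \<sigma> E t p q 0 m n] by (simp add: seqs_dim_Un_le)
  then show ?thesis using card_band_rows_le[of \<sigma> E t p q m n] by simp
qed

text \<open>The rows of block rows \<open>0..n\<close> and \<open>1..n+1\<close> overlap in block rows \<open>1..n\<close>, whose span has
  dimension \<open>r(n)\<close> by translation invariance.\<close>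

lemma band_rank_concave:
  assumes "field_hom \<sigma>"
  shows "band_rank \<sigma> E t p q (Suc (Suc n)) + band_rank \<sigma> E t p q n \<le> 2 * band_rank \<sigma> E t p q (Suc n)"
proof -
  let ?R = "band_rows \<sigma> E t p q"
  have "seqs.dim (?R 0 (Suc n) \<union> ?R (Suc n) 1) + seqs.dim (?R 1 n)
      \<le> seqs.dim (?R 1 n \<union> ?R (Suc n) 1) + seqs.dim (?R 0 (Suc n))"
    using band_rows_add[of \<sigma> E t p q 0 1 n] by (intro seqs_dim_submodular) auto
  moreover have "?R 0 (Suc n) \<union> ?R (Suc n) 1 = ?R 0 (Suc (Suc n))"
    using band_rows_add[of \<sigma> E t p q 0 "Suc n" 1] by simp
  moreover have "?R 1 n \<union> ?R (Suc n) 1 = ?R 1 (Suc n)"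
    using band_rows_add[of \<sigma> E t p q 1 n 1] by simp
  ultimately show ?thesis
    using dim_band_rows_translate[OF assms, of E t p q 1] unfolding band_rank_def by simp
qed

definition seq_trunc :: "nat \<Rightarrow> (nat \<Rightarrow> 'a::zero) \<Rightarrow> nat \<Rightarrow> 'a" where
  "seq_trunc m h = (\<lambda>c. if c < m then 0 else h c)"

lemma semilinear_seq_trunc: "semilinear id (seq_trunc m)"
  by (simp add: semilinear_def seq_trunc_def fun_eq_iff)

lemma seqs_dim_trunc_le:
  fixes Y :: "(nat \<Rightarrow> 'a::field) set"
  assumes "finite Y" and vanish: "\<And>y c. y \<in> Y \<Longrightarrow> c < m \<Longrightarrow> y c = 0"
  shows "seqs.dim Y \<le> seqs.dim (seq_trunc (m + l) ` Y) + l"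
proof -
  define e where "e c = (\<lambda>x. if x = c then 1 else 0 :: 'a)" for c :: nat
  define U where "U = e ` {m..<m + l}"
  have "y = seq_trunc (m + l) y + (\<Sum>c\<in>{m..<m + l}. (\<lambda>x. y c * e c x))" if "y \<in> Y" for y
  proof
    fix x
    have "(\<Sum>c\<in>{m..<m + l}. (\<lambda>x. y c * e c x)) x = (if x \<in> {m..<m + l} then y x else 0)"
      by (simp add: sum_fun_apply e_def if_distrib sum.delta' cong: if_cong)
    then show "y x = (seq_trunc (m + l) y + (\<Sum>c\<in>{m..<m + l}. (\<lambda>x. y c * e c x))) x"
      using vanish[OF that, of x] by (auto simp: seq_trunc_def)
  qed
  moreover have "seq_trunc (m + l) y + (\<Sum>c\<in>{m..<m + l}. (\<lambda>x. y c * e c x))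
      \<in> seqs.span (seq_trunc (m + l) ` Y \<union> U)" if "y \<in> Y" for y
    using that unfolding U_def
    by (intro seqs.span_add seqs.span_sum seqs.span_scale seqs.span_base) auto
  ultimately have "Y \<subseteq> seqs.span (seq_trunc (m + l) ` Y \<union> U)" by auto
  then have "seqs.dim Y \<le> seqs.dim (seq_trunc (m + l) ` Y \<union> U)"
    using assms(1) U_def by (intro seqs_dim_mono) auto
  also have "\<dots> \<le> seqs.dim (seq_trunc (m + l) ` Y) + card U"
    using assms(1) U_def by (intro seqs_dim_Un_le) auto
  also have "card U \<le> l" unfolding U_def using card_image_le[of "{m..<m + l}" e] by simp
  finally show ?thesis by simp
qed

lemma band_row_eq_0_below: "c < a * q \<Longrightarrow> band_row \<sigma> E t q a i c = 0"
  by (simp add: band_row_def)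

lemma band_row_eq_0_above: "(a + t) * q \<le> c \<Longrightarrow> band_row \<sigma> E t q a i c = 0"
  by (simp add: band_row_def)

lemma seq_trunc_band_row_fixed: "b \<le> a \<Longrightarrow> seq_trunc (b * q) (band_row \<sigma> E t q a i) = band_row \<sigma> E t q a i"
proof -
  assume "b \<le> a"
  then have "b * q \<le> a * q" by (rule mult_right_mono) simp
  then have "band_row \<sigma> E t q a i c = 0" if "c < b * q" for c
    using that by (intro band_row_eq_0_below) linarith
  then show ?thesis by (simp add: seq_trunc_def fun_eq_iff)
qed

lemma seq_trunc_band_row_eq_0: "a + t \<le> b \<Longrightarrow> seq_trunc (b * q) (band_row \<sigma> E t q a i) = 0"
proof -
  assume "a + t \<le> b"
  then have "(a + t) * q \<le> b * q" by (rule mult_right_mono) simp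
  then have "band_row \<sigma> E t q a i c = 0" if "\<not> c < b * q" for c
    using that by (intro band_row_eq_0_above) linarith
  then show ?thesis by (simp add: seq_trunc_def fun_eq_iff)
qed

lemma band_rowsE:
  assumes "y \<in> band_rows \<sigma> E t p q s n"
  obtains a i where "s \<le> a" "a < s + n" "y = band_row \<sigma> E t q a i"
  using assms by (auto simp: band_rows_def)

lemma band_rank_le_dim_trunc_rows:
  assumes "field_hom \<sigma>"
  shows "band_rank \<sigma> E t p q k
    \<le> seqs.dim (seq_trunc ((j + (t - 1)) * q) ` band_rows \<sigma> E t p q j k) + (t - 1) * p"
proof (cases "t - 1 \<le> k")
  case True
  let ?Y = "band_rows \<sigma> E t p q j k" and ?\<pi> = "seq_trunc ((j + (t - 1)) * q)"
  obtain k' where k: "k = (t - 1) + k'" using le_Suc_ex[OF True] by blast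
  have "band_rows \<sigma> E t p q (j + (t - 1)) k' \<subseteq> ?\<pi> ` ?Y"
  proof
    fix y assume "y \<in> band_rows \<sigma> E t p q (j + (t - 1)) k'"
    then obtain a i where "j + (t - 1) \<le> a" "y = band_row \<sigma> E t q a i" by (rule band_rowsE)
    then have "?\<pi> y = y" by (simp add: seq_trunc_band_row_fixed)
    moreover have "y \<in> ?Y"
      using \<open>y \<in> _\<close> band_rows_add[of \<sigma> E t p q j "t - 1" k'] k by simp
    ultimately show "y \<in> ?\<pi> ` ?Y" by (metis image_eqI)
  qed
  then have "band_rank \<sigma> E t p q k' \<le> seqs.dim (?\<pi> ` ?Y)"
    using dim_band_rows_translate[OF assms] unfolding band_rank_def
    by (metis finite_band_rows finite_imageI seqs_dim_subset)
  moreover have "band_rank \<sigma> E t p q k \<le> band_rank \<sigma> E t p q k' + (t - 1) * p"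
    using band_rank_add_le[of \<sigma> E t p q k' "t - 1"] k by (simp add: add.commute)
  ultimately show ?thesis by simp
next
  case False
  have "band_rank \<sigma> E t p q k \<le> k * p"
    using band_rank_add_le[of \<sigma> E t p q 0 k] by (simp add: band_rank_def)
  also have "\<dots> \<le> (t - 1) * p" using False by (intro mult_right_mono) auto
  finally show ?thesis by simp
qed

lemma band_rank_le_dim_trunc_cols:
  assumes "field_hom \<sigma>"
  shows "band_rank \<sigma> E t p q k
    \<le> seqs.dim (seq_trunc ((j + (t - 1)) * q) ` band_rows \<sigma> E t p q j k) + (t - 1) * q"
proof -
  let ?Y = "band_rows \<sigma> E t p q j k"
  have "seqs.dim ?Y \<le> seqs.dim (seq_trunc (j * q + (t - 1) * q) ` ?Y) + (t - 1) * q"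
  proof (rule seqs_dim_trunc_le)
    fix y c assume "y \<in> ?Y" "c < j * q"
    then obtain a i where "j \<le> a" "y = band_row \<sigma> E t q a i" by (auto elim: band_rowsE)
    moreover have "j * q \<le> a * q" using \<open>j \<le> a\<close> by (rule mult_right_mono) simp
    then have "c < a * q" using \<open>c < j * q\<close> by linarith
    ultimately show "y c = 0" by (simp add: band_row_eq_0_below)
  qed simp
  moreover have "seqs.dim ?Y = band_rank \<sigma> E t p q k"
    unfolding band_rank_def by (rule dim_band_rows_translate[OF assms])
  ultimately show ?thesis by (simp add: add_mult_distrib)
qed

lemma band_rank_superadditive:
  assumes "field_hom \<sigma>" "t \<ge> 1"
  shows "band_rank \<sigma> E t p q j + band_rank \<sigma> E t p q k \<le> band_rank \<sigma> E t p q (j + k) + (t - 1) * min p q"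
proof -
  let ?X = "band_rows \<sigma> E t p q 0 j" and ?Y = "band_rows \<sigma> E t p q j k"
    and ?\<pi> = "seq_trunc ((j + (t - 1)) * q)"
  have "seqs.dim ?X + seqs.dim (?\<pi> ` ?Y) \<le> seqs.dim (?X \<union> ?Y)"
  proof (rule seqs_dim_kernel_image[OF _ _ semilinear_seq_trunc])
    fix x assume "x \<in> ?X"
    then obtain a i where "a < j" "x = band_row \<sigma> E t q a i" by (auto elim: band_rowsE)
    moreover have "a + t \<le> j + (t - 1)" using \<open>a < j\<close> assms(2) by linarith
    ultimately show "?\<pi> x = 0" by (simp add: seq_trunc_band_row_eq_0)
  qed simp_all
  moreover have "?X \<union> ?Y = band_rows \<sigma> E t p q 0 (j + k)" using band_rows_add[of \<sigma> E t p q 0 j k] by simp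
  ultimately have "band_rank \<sigma> E t p q j + seqs.dim (?\<pi> ` ?Y) \<le> band_rank \<sigma> E t p q (j + k)"
    unfolding band_rank_def by simp
  moreover have "band_rank \<sigma> E t p q k \<le> seqs.dim (?\<pi> ` ?Y) + (t - 1) * min p q"
    using band_rank_le_dim_trunc_rows[OF assms(1), of E t p q k j]
      band_rank_le_dim_trunc_cols[OF assms(1), of E t p q k j] by (simp add: min_def)
  ultimately show ?thesis by linarith
qed

section \<open>Concave sequences with bounded superadditivity defect\<close>

lemma concave_nat_seq_increments:
  fixes r :: "nat \<Rightarrow> nat"
  assumes mono: "\<And>n. r n \<le> r (Suc n)"
    and concave: "\<And>n. r (Suc (Suc n)) + r n \<le> 2 * r (Suc n)"
  obtains d N where "\<And>n. r n + d \<le> r (Suc n)" "\<And>n. N \<le> n \<Longrightarrow> r (Suc n) = r n + d"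
    "\<And>m n. m \<le> n \<Longrightarrow> r (Suc n) - r n \<le> r (Suc m) - r m"
proof -
  define \<delta> where "\<delta> n = r (Suc n) - r n" for n
  have decr: "\<delta> (Suc n) \<le> \<delta> n" for n using concave[of n] mono[of n] mono[of "Suc n"] by (simp add: \<delta>_def)
  have antitone: "\<delta> n \<le> \<delta> m" if "m \<le> n" for m n
    using that by (induction n rule: dec_induct) (auto intro: order.trans[OF decr])
  define d where "d = (LEAST v. v \<in> range \<delta>)"
  have "d \<in> range \<delta>" unfolding d_def by (rule LeastI[of _ "\<delta> 0"]) simp
  then obtain N where N: "\<delta> N = d" by blast
  have d_le: "d \<le> \<delta> n" for n unfolding d_def by (rule Least_le) simp
  have stable: "\<delta> n = d" if "N \<le> n" for n using antitone[OF that] N d_le[of n] by simp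
  show ?thesis
  proof (rule that)
    show "r n + d \<le> r (Suc n)" for n using d_le[of n] mono[of n] by (simp add: \<delta>_def)
    show "r (Suc n) = r n + d" if "N \<le> n" for n using stable[OF that] mono[of n] by (simp add: \<delta>_def)
    show "r (Suc n) - r n \<le> r (Suc m) - r m" if "m \<le> n" for m n using antitone[OF that] by (simp add: \<delta>_def)
  qed
qed

lemma nat_seq_eventually_linear:
  fixes r :: "nat \<Rightarrow> nat"
  assumes mono: "\<And>n. r n \<le> r (Suc n)"
    and concave: "\<And>n. r (Suc (Suc n)) + r n \<le> 2 * r (Suc n)"
    and superadditive: "\<And>j k. r j + r k \<le> r (j + k) + C"
  shows "\<exists>(d::nat) (s::int). \<forall>k \<ge> C. int (r k) = int d * int k + s"
proof -
  obtain d N where min: "\<And>n. r n + d \<le> r (Suc n)" and eventually: "\<And>n. N \<le> n \<Longrightarrow> r (Suc n) = r n + d"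
    and antitone: "\<And>m n. m \<le> n \<Longrightarrow> r (Suc n) - r n \<le> r (Suc m) - r m"
    using concave_nat_seq_increments[of r, OF mono concave] by blast
  have "r (N + k) = r N + d * k" for k by (induction k) (simp_all add: eventually)
  then have upper: "r k \<le> d * k + C" for k using superadditive[of N k] by simp
  have step: "r (Suc n) = r n + d" if "C \<le> n" for n
  proof (rule ccontr)
    assume "r (Suc n) \<noteq> r n + d"
    then have "r m + Suc d \<le> r (Suc m)" if "m \<le> n" for m
      using min[of n] min[of m] antitone[OF that] mono[of m] by linarith
    then have "m * Suc d \<le> r m" if "m \<le> Suc n" for m
      using that by (induction m) (auto, fastforce)
    then have "Suc n * Suc d \<le> d * Suc n + C" using upper[of "Suc n"] by (meson le_refl order.trans)
    then show False using \<open>C \<le> n\<close> by simp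
  qed
  have linear: "r k = r C + d * (k - C)" if "C \<le> k" for k
    using that by (induction k rule: dec_induct) (auto simp: step Suc_diff_le)
  have "int (r k) = int d * int k + (int (r C) - int d * int C)" if "C \<le> k" for k
    using linear[OF that] that by (simp add: of_nat_diff right_diff_distrib)
  then show ?thesis by blast
qed

theorem mainTheorem2:
  fixes \<sigma> :: "'a::field \<Rightarrow> 'a"
    and E :: "nat \<Rightarrow> 'a mat"
    and t p q :: nat
  assumes hom_one: "\<sigma> 1 = 1"
    and hom_add: "\<And>x y. \<sigma> (x + y) = \<sigma> x + \<sigma> y"
    and hom_mult: "\<And>x y. \<sigma> (x * y) = \<sigma> x * \<sigma> y"
    and t_pos: "t \<ge> 1"
    and E_dim: "\<And>i. i \<in> {1..t} \<Longrightarrow> E i \<in> carrier_mat p q"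
  shows "\<exists>(d'::nat) (s'::int). \<forall>k::nat. k \<ge> 1 \<and> k \<ge> (t - 1) * (min p q + 1) \<longrightarrow>
           int (vec_space.rank (k * p) (block_mat \<sigma> E t p q k)) = int d' * int k + s'"
proof -
  have "\<sigma> 0 = 0" using hom_add[of 0 0] by (metis add.right_neutral add_left_cancel)
  then have hom: "field_hom \<sigma>" by unfold_locales (use hom_one hom_add hom_mult in auto)
  obtain d s where linear: "\<And>k. (t - 1) * min p q \<le> k \<Longrightarrow> int (band_rank \<sigma> E t p q k) = int d * int k + s"
    using nat_seq_eventually_linear[of "band_rank \<sigma> E t p q", OF band_rank_mono
        band_rank_concave[OF hom] band_rank_superadditive[OF hom t_pos]] by blast
  have rank: "vec_space.rank (k * p) (block_mat \<sigma> E t p q k) = band_rank \<sigma> E t p q k" for k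
    unfolding band_rank_def using t_pos E_dim by (rule rank_block_mat)
  have "(t - 1) * min p q \<le> (t - 1) * (min p q + 1)" by simp
  then show ?thesis using linear rank by (metis order.trans)
qed

end
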